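(* Let $N\ge3$ and $\alpha>-2$. There exists a constant $C_{N,\alpha}>0$ depending only on $N$ and $\alpha$ such that for every $\beta\le\beta_0$, $$u_\beta(r)\le-(4+\alpha)\ln r+C_{N,\alpha}\quad\text{for all }r>0.$$
   Context: Fix an integer $N\ge3$ and $\alpha>-2$. For $\beta\in\mathbb{R}$, $u_\beta$ denotes the radial function $u_\beta(x)=u_\beta(r)$, $r=|x|$, solving the initial value problem $\Delta^2u=|x|^\alpha e^u$ for $r\in[0,R_\beta)$, $u'(0)=u'''(0)=0$, $u(0)=0$, $\Delta u(0)=\beta$, where $\Delta u=u''+\frac{N-1}{r}u'$ is the radial Laplacian in $\mathbb{R}^N$ and $[0,R_\beta)$ is the maximal interval of existence. $u_\beta$ is called an entire solution if $R_\beta=\infty$. $\beta_0:=\sup\{\beta\in\mathbb{R}:R_\beta=\infty\}$; it is known that $\beta_0$ is a finite negative number and that $R_\beta=\infty$ if and only if $\beta\le\beta_0$. *)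

theory Defs
  imports "HOL-Analysis.Analysis"
begin

(* Radial solution of \<Delta>^2 u = |x|^\<alpha> e^u on [0,R) in R^N, written as the system
  u'' + (N-1)/r u' = v, v'' + (N-1)/r v' = r^\<alpha> e^u on (0,R), with the regular initial
  conditions u(0) = 0, u'(0+) = 0, \<Delta>u(0+) = \<beta>, and r^(N-1) (\<Delta>u)'(r) \<rightarrow> 0 as r \<rightarrow> 0+
  (the meaning of u'''(0)=0 for a regular radial solution; it is literal when \<alpha> \<ge> 0).
  Here u1 = u', v = \<Delta>u, v1 = (\<Delta>u)'. *)
definition radial_sol_on :: "nat \<Rightarrow> real \<Rightarrow> real \<Rightarrow> ereal \<Rightarrow> (real \<Rightarrow> real) \<Rightarrow> bool" where
  "radial_sol_on N \<alpha> \<beta> R u \<longleftrightarrow>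
     0 < R \<and> u 0 = 0 \<and> continuous_on {r. 0 \<le> r \<and> ereal r < R} u \<and>
     (\<exists>u1 v v1.
        (\<forall>r. 0 < r \<and> ereal r < R \<longrightarrow>
            (u has_real_derivative u1 r) (at r) \<and>
            (u1 has_real_derivative (v r - (real N - 1) / r * u1 r)) (at r) \<and>
            (v has_real_derivative v1 r) (at r) \<and>
            (v1 has_real_derivative (r powr \<alpha> * exp (u r) - (real N - 1) / r * v1 r)) (at r)) \<and>
        (u1 \<longlongrightarrow> 0) (at_right 0) \<and>
        (v \<longlongrightarrow> \<beta>) (at_right 0) \<and>
        ((\<lambda>r. r ^ (N - 1) * v1 r) \<longlongrightarrow> 0) (at_right 0))"

definition entire_sol :: "nat \<Rightarrow> real \<Rightarrow> real \<Rightarrow> (real \<Rightarrow> real) \<Rightarrow> bool" where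
  "entire_sol N \<alpha> \<beta> u \<longleftrightarrow> radial_sol_on N \<alpha> \<beta> \<infinity> u"

definition beta0 :: "nat \<Rightarrow> real \<Rightarrow> real" where
  "beta0 N \<alpha> = Sup {\<beta>. \<exists>u. entire_sol N \<alpha> \<beta> u}"

end

theory Submission
  imports Defs
begin

(* First, \<Delta>u \<le> 0 on every entire solution: if \<Delta>u(r1) > 0,
   then \<Delta>u stays positive (its flux r^(N-1) (\<Delta>u)' increases from 0), so u' eventually
   exceeds 1 and u grows linearly. Integrating \<Delta>\<^sup>2u = r^\<alpha> e^u four times over a short
   interval then yields jumps u(x+h) \<ge> u(x) + c e^(u(x)) h^4, and a geometric sequence of
   such jumps makes u unbounded on a bounded interval, contradicting continuity.
   Second, once \<Delta>u \<le> 0, u is decreasing, so e^(u(t)) \<ge> e^(u(r)) for t \<le> r; integrating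
   the equation from 0 three times gives -u'(r) \<ge> c e^(u(r)) r^(3+\<alpha>), i.e.
   (e^(-u))' \<ge> c r^(3+\<alpha>), hence e^(-u(r)) \<ge> c r^(4+\<alpha>) / (4+\<alpha>). *)

lemma tendsto_at_right_0_le_of_deriv_nonneg:
  fixes f f' :: "real \<Rightarrow> real"
  assumes "0 < b"
    and "\<And>t. 0 < t \<Longrightarrow> t \<le> b \<Longrightarrow> (f has_real_derivative f' t) (at t)"
    and "\<And>t. 0 < t \<Longrightarrow> t \<le> b \<Longrightarrow> 0 \<le> f' t"
    and "(f \<longlongrightarrow> L) (at_right 0)"
  shows "L \<le> f b"
proof (rule tendsto_upperbound[OF assms(4)])
  show "\<forall>\<^sub>F t in at_right 0. f t \<le> f b"
    using eventually_at_right_real[OF assms(1)]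
  proof (rule eventually_mono)
    fix t assume "t \<in> {0<..<b}"
    then show "f t \<le> f b"
      by (intro deriv_nonneg_imp_mono[of t b f f']) (use assms in auto)
  qed
qed simp

lemma deriv_le_imp_le:
  fixes f g f' g' :: "real \<Rightarrow> real"
  assumes "a \<le> b" "g a \<le> f a"
    and "\<And>t. a \<le> t \<Longrightarrow> t \<le> b \<Longrightarrow> (f has_real_derivative f' t) (at t)"
    and "\<And>t. a \<le> t \<Longrightarrow> t \<le> b \<Longrightarrow> (g has_real_derivative g' t) (at t)"
    and "\<And>t. a \<le> t \<Longrightarrow> t \<le> b \<Longrightarrow> g' t \<le> f' t"
  shows "g b \<le> f b"
proof -
  have "f a - g a \<le> f b - g b"
    by (rule deriv_nonneg_imp_mono[of a b "\<lambda>t. f t - g t" "\<lambda>t. f' t - g' t"])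
       (use assms in \<open>auto intro!: derivative_eq_intros\<close>)
  then show ?thesis using assms(2) by simp
qed

lemma power_lower_bound_by_deriv:
  fixes f f' :: "real \<Rightarrow> real"
  assumes "x \<le> s" "a \<le> f x"
    and "\<And>t. x \<le> t \<Longrightarrow> t \<le> s \<Longrightarrow> (f has_real_derivative f' t) (at t)"
    and "\<And>t. x \<le> t \<Longrightarrow> t \<le> s \<Longrightarrow> c * (t - x) ^ n \<le> f' t"
  shows "a + c / Suc n * (s - x) ^ Suc n \<le> f s"
proof -
  have "(\<lambda>t. a + c / Suc n * (t - x) ^ Suc n) s \<le> f s"
  proof (rule deriv_le_imp_le[of x s _ f f' "\<lambda>t. c * (t - x) ^ n"])
    fix t
    have "((\<lambda>t. (t - x) ^ Suc n) has_real_derivative real (Suc n) * (t - x) ^ n) (at t)"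
      using DERIV_power[OF DERIV_diff[OF DERIV_ident DERIV_const[of x]], where n="Suc n"] by simp
    from DERIV_add[OF DERIV_const DERIV_cmult[OF this, of "c / Suc n"]]
    show "((\<lambda>t. a + c / Suc n * (t - x) ^ Suc n) has_real_derivative c * (t - x) ^ n) (at t)"
      by (rule DERIV_cong) (simp del: of_nat_Suc)
  qed (use assms in auto)
  then show ?thesis by simp
qed

(* The radial Laplacian in divergence form: y'' + (m/t) y' = t^(-m) (t^m y')'. *)
lemma DERIV_radial_weight:
  fixes y :: "real \<Rightarrow> real"
  assumes "0 < t" "1 \<le> m" "(y has_real_derivative g - real m / t * y t) (at t)"
  shows "((\<lambda>s. s ^ m * y s) has_real_derivative t ^ m * g) (at t)"
proof -
  obtain k where k: "m = Suc k" using assms(2) by (cases m) auto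
  have "((\<lambda>s. s ^ m * y s) has_real_derivative
          real m * t ^ (m - Suc 0) * y t + (g - real m / t * y t) * t ^ m) (at t)"
    by (rule DERIV_mult[OF DERIV_pow assms(3)])
  moreover have "real m * t ^ (m - Suc 0) * y t + (g - real m / t * y t) * t ^ m = t ^ m * g"
    unfolding k using assms(1) by (simp add: field_simps)
  ultimately show ?thesis by simp
qed

lemma power_mult_powr:
  fixes t :: real
  assumes "0 < t" "1 \<le> n"
  shows "t ^ (n - 1) * t powr a = t powr (real n - 1 + a)"
proof -
  have "t ^ (n - 1) = t powr real (n - 1)"
    using assms(1) by (simp add: powr_realpow)
  also have "real (n - 1) = real n - 1"
    using assms(2) by (simp add: of_nat_diff)
  finally show ?thesis by (simp add: powr_add)
qed

lemma powr_tendsto_at_right_0: "0 < p \<Longrightarrow> ((\<lambda>t::real. t powr p) \<longlongrightarrow> 0) (at_right 0)"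
  by (rule tendsto_zero_powrI[of "\<lambda>t. t"])
     (auto intro: tendsto_ident_at eventually_mono[OF eventually_at_right_less])

lemma sum_geometric_le_1:
  fixes A q :: real
  assumes "0 \<le> A" "0 < q" "q < 1" "A \<le> 1 - q"
  shows "(\<Sum>j<k. A * q ^ j) \<le> 1"
proof -
  have "(\<Sum>j<k. A * q ^ j) = A * ((1 - q ^ k) / (1 - q))"
    using assms by (simp add: sum_distrib_left[symmetric] sum_gp_strict)
  also have "\<dots> \<le> A * (1 / (1 - q))"
    using assms by (intro mult_left_mono divide_right_mono) auto
  also have "\<dots> \<le> 1" using assms by (simp add: divide_le_eq)
  finally show ?thesis .
qed

lemma quartic_jumps_contradict_continuity:
  fixes f :: "real \<Rightarrow> real"
  assumes cont: "continuous_on {a..a + 1} f" and D: "0 < D"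
    and small: "D * exp (- f a) \<le> (1 - exp (- 1 / 4)) ^ 4"
    and jump: "\<And>x h. a \<le> x \<Longrightarrow> 0 \<le> h \<Longrightarrow> x + h \<le> a + 1 \<Longrightarrow>
                 f x + exp (f x) * h ^ 4 / D \<le> f (x + h)"
  shows False
proof -
  define q :: real where "q = exp (- 1 / 4)"
  define A where "A = root 4 (D * exp (- f a))"
  have q: "0 < q" "q < 1" "q ^ 4 = exp (- 1)"
    unfolding q_def using exp_of_nat_mult[of 4 "- 1 / 4 :: real"] by auto
  have A: "0 \<le> A" "A ^ 4 = D * exp (- f a)"
    unfolding A_def using D by (auto simp: real_root_ge_zero)
  have "A ^ 4 \<le> (1 - q) ^ 4" using A(2) small unfolding q_def by simp
  then have A_le: "A \<le> 1 - q" using A(1) q by (subst (asm) power_mono_iff) auto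
  define p where "p k = a + (\<Sum>j<k. A * q ^ j)" for k
  have p_range: "a \<le> p k \<and> p k \<le> a + 1" for k
    unfolding p_def using sum_geometric_le_1[OF A(1) q(1,2) A_le, of k] A(1) q
    by (auto intro!: sum_nonneg)
  \<comment> \<open>The steps \<open>A q\<^sup>k\<close> have total length at most 1, yet each one raises \<open>f\<close>
     by at least 1, because \<open>q\<^sup>4 = exp (-1)\<close>.\<close>
  have p_grow: "f a + real k \<le> f (p k)" for k
  proof (induction k)
    case 0 then show ?case unfolding p_def by simp
  next
    case (Suc k)
    have "(A * q ^ k) ^ 4 = A ^ 4 * (q ^ 4) ^ k"
      by (metis power_mult power_mult_distrib mult.commute)
    also have "(q ^ 4) ^ k = exp (- real k)"
      using q(3) exp_of_nat_mult[of k "- 1 :: real"] by simp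
    finally have step_len: "(A * q ^ k) ^ 4 = D * exp (- f a) * exp (- real k)"
      using A(2) by simp
    have "exp (f (p k)) * (A * q ^ k) ^ 4 / D = exp (f (p k) - f a - real k)"
      unfolding step_len using D by (simp add: exp_diff exp_minus divide_inverse)
    moreover have "1 \<le> exp (f (p k) - f a - real k)" using Suc.IH by simp
    moreover have "f (p k) + exp (f (p k)) * (A * q ^ k) ^ 4 / D \<le> f (p (Suc k))"
      using jump[of "p k" "A * q ^ k"] p_range[of k] p_range[of "Suc k"] A(1) q
      by (simp add: p_def add.assoc)
    ultimately show ?case using Suc.IH by linarith
  qed
  obtain M where M: "\<And>y. y \<in> {a..a + 1} \<Longrightarrow> f y \<le> M"
    using continuous_attains_sup[OF compact_Icc _ cont]
    by (metis atLeastAtMost_iff le_add_same_cancel1 zero_le_one empty_iff)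
  define k where "k = nat \<lceil>M - f a\<rceil> + 1"
  have "f (p k) \<le> M" using M p_range[of k] by simp
  moreover have "M - f a < real k" unfolding k_def by linarith
  ultimately show False using p_grow[of k] by linarith
qed

lemma linear_growth_imp_power_exp_small:
  fixes f :: "real \<Rightarrow> real"
  assumes growth: "\<And>s. a \<le> s \<Longrightarrow> f a + (s - a) \<le> f s" and "0 < \<epsilon>"
  obtains R where "a \<le> R" "(R + 1) ^ n * exp (- f R) \<le> \<epsilon>"
proof -
  define K where "K = exp (a - f a + 1)"
  have "0 < K" "0 < \<epsilon> / K" unfolding K_def using assms(2) by auto
  with tendsto_power_div_exp_0[of n]
  have "\<forall>\<^sub>F y in at_top. y ^ n / exp y < \<epsilon> / K" by (intro order_tendstoD(2)) auto
  then obtain Y where Y: "\<And>y. Y \<le> y \<Longrightarrow> y ^ n / exp y < \<epsilon> / K"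
    by (auto simp: eventually_at_top_linorder)
  define R where "R = max (max a 0) Y"
  have R: "a \<le> R" "0 \<le> R" "Y \<le> R + 1" unfolding R_def by auto
  have "exp (- f R) \<le> K * exp (- (R + 1))"
    using growth[OF R(1)] unfolding K_def by (simp flip: exp_add)
  then have "(R + 1) ^ n * exp (- f R) \<le> (R + 1) ^ n * (K * exp (- (R + 1)))"
    using R(2) by (intro mult_left_mono) auto
  also have "\<dots> = K * ((R + 1) ^ n / exp (R + 1))"
    unfolding exp_minus by (simp add: divide_inverse)
  also have "\<dots> \<le> \<epsilon>"
    using less_imp_le[OF Y[OF R(3)]] \<open>0 < K\<close> by (simp add: field_simps)
  finally show ?thesis using R(1) that by blast
qed

locale entire_radial_solution =
  fixes N :: nat and \<alpha> :: real and u u1 v v1 :: "real \<Rightarrow> real"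
  assumes dim: "3 \<le> N" and alpha: "-2 < \<alpha>"
    and u_deriv: "\<And>r. 0 < r \<Longrightarrow> (u has_real_derivative u1 r) (at r)"
    and u1_deriv: "\<And>r. 0 < r \<Longrightarrow>
          (u1 has_real_derivative v r - (real N - 1) / r * u1 r) (at r)"
    and v_deriv: "\<And>r. 0 < r \<Longrightarrow> (v has_real_derivative v1 r) (at r)"
    and v1_deriv: "\<And>r. 0 < r \<Longrightarrow>
          (v1 has_real_derivative r powr \<alpha> * exp (u r) - (real N - 1) / r * v1 r) (at r)"
    and u_cont: "continuous_on {0..} u" and u_0: "u 0 = 0"
    and u1_at_0: "(u1 \<longlongrightarrow> 0) (at_right 0)"
    and v1_flux_at_0: "((\<lambda>r. r ^ (N - 1) * v1 r) \<longlongrightarrow> 0) (at_right 0)"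
begin

lemma u1_flux_deriv:
  "0 < t \<Longrightarrow> ((\<lambda>s. s ^ (N - 1) * u1 s) has_real_derivative t ^ (N - 1) * v t) (at t)"
  using u1_deriv[of t] dim by (intro DERIV_radial_weight) (auto simp: of_nat_diff)

lemma v1_flux_deriv:
  "0 < t \<Longrightarrow> ((\<lambda>s. s ^ (N - 1) * v1 s) has_real_derivative
                t ^ (N - 1) * (t powr \<alpha> * exp (u t))) (at t)"
  using v1_deriv[of t] dim by (intro DERIV_radial_weight) (auto simp: of_nat_diff)

lemma u1_flux_at_0: "((\<lambda>s. s ^ (N - 1) * u1 s) \<longlongrightarrow> 0) (at_right 0)"
proof -
  have "((\<lambda>s. s ^ (N - 1) * u1 s) \<longlongrightarrow> 0 ^ (N - 1) * 0) (at_right 0)"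
    by (intro tendsto_intros tendsto_ident_at u1_at_0)
  then show ?thesis using dim by simp
qed

lemma v1_flux_nonneg: "0 < t \<Longrightarrow> 0 \<le> t ^ (N - 1) * v1 t"
  by (rule tendsto_at_right_0_le_of_deriv_nonneg[OF _ v1_flux_deriv _ v1_flux_at_0]) auto

lemma v1_nonneg:
  assumes "0 < t" shows "0 \<le> v1 t"
proof -
  have "0 < t ^ (N - 1)" using assms by simp
  with v1_flux_nonneg[OF assms] show ?thesis by (simp add: zero_le_mult_iff)
qed

lemma v_mono: "0 < a \<Longrightarrow> a \<le> b \<Longrightarrow> v a \<le> v b"
  by (rule deriv_nonneg_imp_mono[of a b v v1]) (auto intro: v_deriv v1_nonneg)

lemma u1_ge_1_eventually:
  assumes "0 < r1" "0 < v r1"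
  obtains r2 where "max 1 r1 \<le> r2" "\<And>r. r2 \<le> r \<Longrightarrow> 1 \<le> u1 r"
proof -
  define c where "c = r1 ^ (N - 1) * u1 r1 - v r1 * r1 ^ N / N"
  have flux_lower: "v r1 * r ^ N / N + c \<le> r ^ (N - 1) * u1 r" if "r1 \<le> r" for r
  proof (rule deriv_le_imp_le[OF that, where f' = "\<lambda>s. s ^ (N - 1) * v s"
                                           and g' = "\<lambda>s. s ^ (N - 1) * v r1"])
    fix t assume t: "r1 \<le> t" "t \<le> r"
    show "((\<lambda>s. v r1 * s ^ N / N + c) has_real_derivative t ^ (N - 1) * v r1) (at t)"
      using dim by (auto intro!: derivative_eq_intros)
    show "((\<lambda>s. s ^ (N - 1) * u1 s) has_real_derivative t ^ (N - 1) * v t) (at t)"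
      using t assms(1) by (intro u1_flux_deriv) simp
    show "t ^ (N - 1) * v r1 \<le> t ^ (N - 1) * v t"
      using t assms(1) by (intro mult_left_mono v_mono) auto
  qed (simp add: c_def)
  define r2 where "r2 = max (max 1 r1) (max (2 * N / v r1) (\<bar>c\<bar> + 1))"
  show ?thesis
  proof (rule that)
    show "max 1 r1 \<le> r2" unfolding r2_def by simp
    fix r assume "r2 \<le> r"
    then have r: "1 \<le> r" "r1 \<le> r" "2 * N / v r1 \<le> r" "\<bar>c\<bar> + 1 \<le> r"
      unfolding r2_def by auto
    define P where "P = r ^ (N - 1)"
    have "r \<le> P" unfolding P_def using power_increasing[of 1 "N - 1" r] dim r(1) by simp
    have "r ^ N = P * r" unfolding P_def using dim by (cases N) auto
    have "2 \<le> v r1 * r / N" using r(3) assms(2) dim by (simp add: field_simps)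
    then have "P * 2 \<le> P * (v r1 * r / N)" using \<open>r \<le> P\<close> r(1) by (intro mult_left_mono) auto
    then have "P * 1 \<le> P * u1 r"
      using flux_lower[OF r(2)] \<open>r ^ N = P * r\<close> \<open>r \<le> P\<close> r(4) unfolding P_def[symmetric]
      by (simp add: algebra_simps)
    then show "1 \<le> u1 r" using \<open>r \<le> P\<close> r(1) by simp
  qed
qed

lemma v_quadratic_growth:
  assumes x: "1 \<le> x" "x \<le> s" "s \<le> b" "0 \<le> v x"
    and u_ge: "\<And>t. x \<le> t \<Longrightarrow> t \<le> s \<Longrightarrow> u x \<le> u t"
  shows "exp (u x) / b ^ (N - 1) / 2 * (s - x) ^ 2 \<le> v s"
proof -
  define E where "E = exp (u x)"
  define P where "P = b ^ (N - 1)"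
  have t: "0 < t" "1 \<le> t ^ (N - 1)" "t ^ (N - 1) \<le> P" if "x \<le> t" "t \<le> s" for t
    using that x unfolding P_def by (auto intro: power_mono)
  have "1 \<le> P" using order_trans[OF t(2) t(3), of x] x by simp
  have v1_flux_lower: "0 + E / Suc 0 * (t - x) ^ Suc 0 \<le> t ^ (N - 1) * v1 t"
    if "x \<le> t" "t \<le> s" for t
  proof (rule power_lower_bound_by_deriv[OF that(1),
           where f' = "\<lambda>t. t ^ (N - 1) * (t powr \<alpha> * exp (u t))"])
    fix y assume "x \<le> y" "y \<le> t"
    with that have y: "x \<le> y" "y \<le> s" by auto
    show "((\<lambda>t. t ^ (N - 1) * v1 t) has_real_derivative
            y ^ (N - 1) * (y powr \<alpha> * exp (u y))) (at y)"
      using t[OF y] by (intro v1_flux_deriv) auto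
    have "1 \<le> y ^ (N - 1) * y powr \<alpha>"
      using power_mult_powr[of y N \<alpha>] t[OF y] y x dim alpha by (auto intro: ge_one_powr_ge_zero)
    moreover have "E \<le> exp (u y)" unfolding E_def using u_ge[OF y] by simp
    ultimately have "1 * E \<le> (y ^ (N - 1) * y powr \<alpha>) * exp (u y)"
      unfolding E_def by (intro mult_mono) auto
    then show "E * (y - x) ^ 0 \<le> y ^ (N - 1) * (y powr \<alpha> * exp (u y))" by (simp add: mult_ac)
  qed (use v1_flux_nonneg x in auto)
  have v1_lower: "E / P * (t - x) \<le> v1 t" if "x \<le> t" "t \<le> s" for t
  proof -
    have "E * (t - x) \<le> t ^ (N - 1) * v1 t" using v1_flux_lower[OF that] by simp
    also have "\<dots> \<le> P * v1 t" using t[OF that] by (intro mult_right_mono v1_nonneg) auto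
    finally show ?thesis using \<open>1 \<le> P\<close> by (simp add: field_simps)
  qed
  have "0 + E / P / Suc 1 * (s - x) ^ Suc 1 \<le> v s"
    by (rule power_lower_bound_by_deriv[OF x(2), where f' = v1])
       (use x v_deriv v1_lower t in auto)
  then show ?thesis unfolding E_def P_def by (simp add: power2_eq_square)
qed

lemma quartic_growth_step:
  assumes x: "1 \<le> x" "0 \<le> h" "x + h \<le> b"
    and nonneg: "\<And>s. x \<le> s \<Longrightarrow> s \<le> x + h \<Longrightarrow> 0 \<le> v s \<and> 0 \<le> u1 s"
  shows "u x + exp (u x) * h ^ 4 / (24 * (b ^ (N - 1))\<^sup>2) \<le> u (x + h)"
proof -
  define E where "E = exp (u x)"
  define P where "P = b ^ (N - 1)"
  have s: "0 < s" "1 \<le> s ^ (N - 1)" "s ^ (N - 1) \<le> P" if "x \<le> s" "s \<le> x + h" for s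
    using that x unfolding P_def by (auto intro: power_mono)
  have "1 \<le> P" using order_trans[OF s(2) s(3), of x] x by simp
  have u_ge: "u x \<le> u s" if "x \<le> s" "s \<le> x + h" for s
    using that s nonneg by (auto intro!: deriv_nonneg_imp_mono[of x s u u1] u_deriv)
  have u1_flux_lower: "0 + E / P / 2 / Suc 2 * (s - x) ^ Suc 2 \<le> s ^ (N - 1) * u1 s"
    if "x \<le> s" "s \<le> x + h" for s
  proof (rule power_lower_bound_by_deriv[OF that(1), where f' = "\<lambda>t. t ^ (N - 1) * v t"])
    fix t assume "x \<le> t" "t \<le> s"
    with that have t: "x \<le> t" "t \<le> x + h" by auto
    show "((\<lambda>s. s ^ (N - 1) * u1 s) has_real_derivative t ^ (N - 1) * v t) (at t)"
      using s[OF t] by (intro u1_flux_deriv) auto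
    have "E / P / 2 * (t - x) ^ 2 \<le> v t"
      unfolding E_def P_def using t x nonneg u_ge by (intro v_quadratic_growth) auto
    also have "\<dots> \<le> t ^ (N - 1) * v t"
      using s[OF t] nonneg[OF t] mult_right_mono[of 1 "t ^ (N - 1)" "v t"] by simp
    finally show "E / P / 2 * (t - x) ^ 2 \<le> t ^ (N - 1) * v t" .
  qed (use nonneg x in auto)
  have u1_lower: "E / P\<^sup>2 / 6 * (s - x) ^ 3 \<le> u1 s" if "x \<le> s" "s \<le> x + h" for s
  proof -
    have "E / P / 6 * (s - x) ^ 3 \<le> s ^ (N - 1) * u1 s" using u1_flux_lower[OF that] by simp
    also have "\<dots> \<le> P * u1 s"
      using s[OF that] nonneg[OF that] by (intro mult_right_mono) auto
    finally show ?thesis using \<open>1 \<le> P\<close> by (simp add: field_simps power2_eq_square)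
  qed
  have "u x + E / P\<^sup>2 / 6 / Suc 3 * (x + h - x) ^ Suc 3 \<le> u (x + h)"
    by (rule power_lower_bound_by_deriv[where f = u and f' = u1]) (use x u_deriv u1_lower s in auto)
  then show ?thesis unfolding E_def P_def by simp
qed

lemma v_nonpos:
  assumes "0 < r1"
  shows "v r1 \<le> 0"
proof (rule ccontr)
  assume "\<not> v r1 \<le> 0"
  then obtain r2 where r2: "max 1 r1 \<le> r2" and u1_ge: "\<And>r. r2 \<le> r \<Longrightarrow> 1 \<le> u1 r"
    using u1_ge_1_eventually[OF assms] by auto
  have nonneg: "0 \<le> v s \<and> 0 \<le> u1 s" if "r2 \<le> s" for s
    using v_mono[OF assms, of s] u1_ge[OF that] that r2 \<open>\<not> v r1 \<le> 0\<close> by auto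
  have "u r2 + 1 / Suc 0 * (s - r2) ^ Suc 0 \<le> u s" if "r2 \<le> s" for s
    by (rule power_lower_bound_by_deriv[OF that, where f' = u1])
       (use r2 u1_ge in \<open>auto intro: u_deriv\<close>)
  then have u_linear: "u r2 + (s - r2) \<le> u s" if "r2 \<le> s" for s
    using that by simp
  obtain R where R: "r2 \<le> R"
    and "(R + 1) ^ (2 * (N - 1)) * exp (- u R) \<le> (1 - exp (- 1 / 4)) ^ 4 / 24"
    by (rule linear_growth_imp_power_exp_small[OF u_linear,
             where \<epsilon> = "(1 - exp (- 1 / 4)) ^ 4 / 24" and n = "2 * (N - 1)"]) auto
  moreover define D where "D = 24 * ((R + 1) ^ (N - 1))\<^sup>2"
  ultimately have small: "D * exp (- u R) \<le> (1 - exp (- 1 / 4)) ^ 4"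
    by (simp add: power_mult[symmetric] mult.commute[of 2])
  show False
  proof (rule quartic_jumps_contradict_continuity[where f = u and a = R and D = D, OF _ _ small])
    show "continuous_on {R..R + 1} u"
      using R r2 by (intro continuous_on_subset[OF u_cont]) auto
    show "0 < D" using R r2 unfolding D_def by simp
    fix x h assume "R \<le> x" "0 \<le> h" "x + h \<le> R + 1"
    then show "u x + exp (u x) * h ^ 4 / D \<le> u (x + h)"
      unfolding D_def using R r2 nonneg by (intro quartic_growth_step) auto
  qed
qed

lemma u_tendsto_0: "(u \<longlongrightarrow> 0) (at_right 0)"
proof -
  have "(u \<longlongrightarrow> u 0) (at 0 within {0..})" using u_cont by (simp add: continuous_on_def)
  then have "(u \<longlongrightarrow> u 0) (at 0 within {0<..})" by (rule tendsto_within_subset) auto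
  then show ?thesis using u_0 by simp
qed

lemma u1_nonpos:
  assumes "0 < t"
  shows "u1 t \<le> 0"
proof -
  have "0 \<le> - (t ^ (N - 1) * u1 t)"
  proof (rule tendsto_at_right_0_le_of_deriv_nonneg[OF assms,
           where f = "\<lambda>s. - (s ^ (N - 1) * u1 s)" and f' = "\<lambda>s. - (s ^ (N - 1) * v s)"])
    fix s :: real assume "0 < s"
    then show "((\<lambda>s. - (s ^ (N - 1) * u1 s)) has_real_derivative - (s ^ (N - 1) * v s)) (at s)"
      by (intro DERIV_minus u1_flux_deriv)
    show "0 \<le> - (s ^ (N - 1) * v s)"
      using v_nonpos[OF \<open>0 < s\<close>] \<open>0 < s\<close> by (simp add: mult_nonneg_nonpos)
  next
    show "((\<lambda>s. - (s ^ (N - 1) * u1 s)) \<longlongrightarrow> 0) (at_right 0)"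
      using tendsto_minus[OF u1_flux_at_0] by simp
  qed
  moreover have "0 < t ^ (N - 1)" using assms by simp
  ultimately show ?thesis by (simp add: mult_le_0_iff)
qed

lemma u_antimono: "0 < a \<Longrightarrow> a \<le> b \<Longrightarrow> u b \<le> u a"
  by (rule deriv_nonpos_imp_antimono[of a b u u1]) (auto intro: u_deriv u1_nonpos)

lemma v1_lower_bound:
  assumes "0 < r"
  shows "exp (u r) * r powr (1 + \<alpha>) / (N + \<alpha>) \<le> v1 r"
proof -
  have "0 < N + \<alpha>" using dim alpha by simp
  have "0 \<le> r ^ (N - 1) * v1 r - exp (u r) * r powr (N + \<alpha>) / (N + \<alpha>)"
  proof (rule tendsto_at_right_0_le_of_deriv_nonneg[OF assms,
           where f = "\<lambda>t. t ^ (N - 1) * v1 t - exp (u r) * t powr (N + \<alpha>) / (N + \<alpha>)"])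
    fix t :: real assume t: "0 < t" "t \<le> r"
    show "((\<lambda>t. t ^ (N - 1) * v1 t - exp (u r) * t powr (N + \<alpha>) / (N + \<alpha>)) has_real_derivative
            t ^ (N - 1) * (t powr \<alpha> * exp (u t))
            - exp (u r) * ((N + \<alpha>) * t powr (N + \<alpha> - 1)) / (N + \<alpha>)) (at t)"
      by (intro DERIV_diff v1_flux_deriv DERIV_cdivide DERIV_cmult has_real_derivative_powr t(1))
    have "exp (u r) * ((N + \<alpha>) * t powr (N + \<alpha> - 1)) / (N + \<alpha>) = t powr (N + \<alpha> - 1) * exp (u r)"
      using \<open>0 < N + \<alpha>\<close> by simp
    also have "\<dots> \<le> t powr (N + \<alpha> - 1) * exp (u t)"
      using u_antimono t by (intro mult_left_mono) auto
    also have "\<dots> = t ^ (N - 1) * (t powr \<alpha> * exp (u t))"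
      using power_mult_powr[OF t(1), of N \<alpha>] dim by (simp add: algebra_simps)
    finally show "0 \<le> t ^ (N - 1) * (t powr \<alpha> * exp (u t))
                  - exp (u r) * ((N + \<alpha>) * t powr (N + \<alpha> - 1)) / (N + \<alpha>)"
      by simp
  next
    have "((\<lambda>t. t ^ (N - 1) * v1 t - exp (u r) * t powr (N + \<alpha>) / (N + \<alpha>))
            \<longlongrightarrow> 0 - exp (u r) * 0 / (N + \<alpha>)) (at_right 0)"
      using \<open>0 < N + \<alpha>\<close> by (intro tendsto_intros v1_flux_at_0 powr_tendsto_at_right_0) auto
    then show "((\<lambda>t. t ^ (N - 1) * v1 t - exp (u r) * t powr (N + \<alpha>) / (N + \<alpha>)) \<longlongrightarrow> 0) (at_right 0)"
      by simp
  qed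
  moreover have "r powr (N + \<alpha>) = r ^ (N - 1) * r powr (1 + \<alpha>)"
    using power_mult_powr[OF assms, of N "1 + \<alpha>"] dim by simp
  ultimately have "r ^ (N - 1) * (exp (u r) * r powr (1 + \<alpha>) / (N + \<alpha>)) \<le> r ^ (N - 1) * v1 r"
    by (simp add: algebra_simps)
  then show ?thesis by (rule mult_left_le_imp_le) (use assms in simp)
qed

lemma minus_v_lower_bound:
  assumes "0 < t" "t \<le> r"
  shows "exp (u r) / ((N + \<alpha>) * (2 + \<alpha>)) * (r powr (2 + \<alpha>) - t powr (2 + \<alpha>)) \<le> - v t"
proof -
  define K where "K = exp (u r) / ((N + \<alpha>) * (2 + \<alpha>))"
  define G where "G s = - v s - K * (r powr (2 + \<alpha>) - s powr (2 + \<alpha>))" for s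
  have "G r \<le> G t"
  proof (rule deriv_nonpos_imp_antimono[of t r G
          "\<lambda>s. - v1 s - K * (0 - (2 + \<alpha>) * s powr (2 + \<alpha> - 1))"])
    fix s assume "s \<in> {t..r}"
    then have s: "0 < s" "s \<le> r" using assms by auto
    show "(G has_real_derivative - v1 s - K * (0 - (2 + \<alpha>) * s powr (2 + \<alpha> - 1))) (at s)"
      unfolding G_def by (intro DERIV_diff DERIV_minus v_deriv DERIV_cmult DERIV_const
                                has_real_derivative_powr s(1))
    have "K * ((2 + \<alpha>) * s powr (2 + \<alpha> - 1)) = exp (u r) * s powr (1 + \<alpha>) / (N + \<alpha>)"
      unfolding K_def using alpha by (simp add: add_eq_0_iff)
    also have "\<dots> \<le> exp (u s) * s powr (1 + \<alpha>) / (N + \<alpha>)"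
      using u_antimono[OF s] dim alpha by (intro divide_right_mono mult_right_mono) auto
    also have "\<dots> \<le> v1 s" by (rule v1_lower_bound[OF s(1)])
    finally show "- v1 s - K * (0 - (2 + \<alpha>) * s powr (2 + \<alpha> - 1)) \<le> 0" by simp
  qed (use assms in auto)
  moreover have "G r = - v r" unfolding G_def by simp
  ultimately show ?thesis using v_nonpos[of r] assms unfolding G_def K_def by simp
qed

lemma minus_u1_flux_lower_bound:
  assumes "0 < r"
  shows "exp (u r) / ((N + \<alpha>) * (2 + \<alpha>))
           * (r powr (2 + \<alpha>) * r ^ N / N - r powr (N + 2 + \<alpha>) / (N + 2 + \<alpha>))
         \<le> - (r ^ (N - 1) * u1 r)"
proof -
  define K where "K = exp (u r) / ((N + \<alpha>) * (2 + \<alpha>))"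
  define m where "m = N + 2 + \<alpha>"
  have pos: "0 < real N" "0 < N + \<alpha>" "0 < 2 + \<alpha>" "0 < m"
    using dim alpha unfolding m_def by auto
  define H where
    "H t = - (t ^ (N - 1) * u1 t) - K * (r powr (2 + \<alpha>) * t ^ N / N - t powr m / m)" for t
  have "0 \<le> H r"
  proof (rule tendsto_at_right_0_le_of_deriv_nonneg[OF assms, where f = H and
        f' = "\<lambda>t. - (t ^ (N - 1) * v t)
                 - K * (r powr (2 + \<alpha>) * (N * t ^ (N - Suc 0)) / N - m * t powr (m - 1) / m)"])
    fix t :: real assume t: "0 < t" "t \<le> r"
    show "(H has_real_derivative - (t ^ (N - 1) * v t)
            - K * (r powr (2 + \<alpha>) * (N * t ^ (N - Suc 0)) / N - m * t powr (m - 1) / m)) (at t)"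
      unfolding H_def
      by (intro DERIV_diff DERIV_minus u1_flux_deriv DERIV_cmult DERIV_cdivide DERIV_pow
                has_real_derivative_powr t(1))
    have "t powr (m - 1) = t ^ (N - 1) * t powr (2 + \<alpha>)"
      using power_mult_powr[OF t(1), of N "2 + \<alpha>"] dim unfolding m_def by (simp add: algebra_simps)
    then have "- (t ^ (N - 1) * v t)
                 - K * (r powr (2 + \<alpha>) * (N * t ^ (N - Suc 0)) / N - m * t powr (m - 1) / m)
               = t ^ (N - 1) * (- v t - K * (r powr (2 + \<alpha>) - t powr (2 + \<alpha>)))"
      using pos by (simp add: algebra_simps)
    moreover have "0 \<le> - v t - K * (r powr (2 + \<alpha>) - t powr (2 + \<alpha>))"
      using minus_v_lower_bound[OF t] unfolding K_def by simp
    ultimately show "0 \<le> - (t ^ (N - 1) * v t)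
                 - K * (r powr (2 + \<alpha>) * (N * t ^ (N - Suc 0)) / N - m * t powr (m - 1) / m)"
      using t by simp
  next
    have "(H \<longlongrightarrow> - 0 - K * (r powr (2 + \<alpha>) * 0 ^ N / N - 0 / m)) (at_right 0)"
      unfolding H_def using pos
      by (intro tendsto_intros tendsto_ident_at u1_flux_at_0 powr_tendsto_at_right_0) auto
    then show "(H \<longlongrightarrow> 0) (at_right 0)" using dim by (simp add: zero_power)
  qed
  then show ?thesis unfolding H_def K_def m_def by simp
qed

lemma minus_u1_lower_bound:
  assumes "0 < r"
  shows "exp (u r) * r powr (3 + \<alpha>) / ((N + \<alpha>) * N * (N + 2 + \<alpha>)) \<le> - u1 r"
proof -
  define K where "K = exp (u r) / ((N + \<alpha>) * (2 + \<alpha>))"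
  define m where "m = N + 2 + \<alpha>"
  have pos: "0 < real N" "0 < N + \<alpha>" "0 < 2 + \<alpha>" "0 < m"
    using dim alpha unfolding m_def by auto
  define X where "X = r ^ (N - 1) * r powr (3 + \<alpha>)"
  have "r powr (2 + \<alpha>) * r ^ N = X"
    unfolding X_def using assms dim
    by (cases N) (simp_all add: powr_add[of r "2 + \<alpha>" 1, simplified] mult_ac)
  moreover have "r powr m = X"
    unfolding X_def using power_mult_powr[OF assms, of N "3 + \<alpha>"] dim
    unfolding m_def by (simp add: algebra_simps)
  ultimately have "K * (r powr (2 + \<alpha>) * r ^ N / N - r powr m / m) = K * (X / N - X / m)"
    by simp
  also have "X / N - X / m = X * (2 + \<alpha>) / (N * m)"
    using pos m_def by (simp add: field_simps)
  also have "K * (X * (2 + \<alpha>) / (N * m)) = exp (u r) * X / ((N + \<alpha>) * N * m)"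
    unfolding K_def using pos(3) by (simp add: mult.assoc mult.left_commute[of "2 + \<alpha>"])
  finally have "r ^ (N - 1) * (exp (u r) * r powr (3 + \<alpha>) / ((N + \<alpha>) * N * m))
                  \<le> r ^ (N - 1) * - u1 r"
    using minus_u1_flux_lower_bound[OF assms] unfolding K_def m_def X_def by (simp add: mult_ac)
  then show ?thesis unfolding m_def by (rule mult_left_le_imp_le) (use assms in simp)
qed

lemma u_log_bound:
  assumes "0 < r"
  shows "u r \<le> - (4 + \<alpha>) * ln r + ln ((4 + \<alpha>) * (N + \<alpha>) * N * (N + 2 + \<alpha>))"
proof -
  define Q where "Q = (4 + \<alpha>) * (N + \<alpha>) * N * (N + 2 + \<alpha>)"
  have "0 < Q" using dim alpha unfolding Q_def by simp
  have "1 \<le> exp (- u r) - r powr (4 + \<alpha>) / Q"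
  proof (rule tendsto_at_right_0_le_of_deriv_nonneg[OF assms,
        where f = "\<lambda>t. exp (- u t) - t powr (4 + \<alpha>) / Q"
          and f' = "\<lambda>t. exp (- u t) * - u1 t - (4 + \<alpha>) * t powr (4 + \<alpha> - 1) / Q"])
    fix t :: real assume t: "0 < t" "t \<le> r"
    show "((\<lambda>t. exp (- u t) - t powr (4 + \<alpha>) / Q) has_real_derivative
            exp (- u t) * - u1 t - (4 + \<alpha>) * t powr (4 + \<alpha> - 1) / Q) (at t)"
      by (intro DERIV_diff DERIV_fun_exp DERIV_minus u_deriv DERIV_cdivide
                has_real_derivative_powr t(1))
    have "(4 + \<alpha>) * t powr (4 + \<alpha> - 1) / Q = t powr (3 + \<alpha>) / ((N + \<alpha>) * N * (N + 2 + \<alpha>))"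
      using alpha unfolding Q_def by (simp add: add_eq_0_iff mult.assoc)
    also have "\<dots> = exp (- u t) * (exp (u t) * t powr (3 + \<alpha>) / ((N + \<alpha>) * N * (N + 2 + \<alpha>)))"
      by (simp add: exp_minus)
    also have "\<dots> \<le> exp (- u t) * - u1 t"
      by (intro mult_left_mono minus_u1_lower_bound t(1)) simp
    finally show "0 \<le> exp (- u t) * - u1 t - (4 + \<alpha>) * t powr (4 + \<alpha> - 1) / Q" by simp
  next
    have "((\<lambda>t. exp (- u t) - t powr (4 + \<alpha>) / Q) \<longlongrightarrow> exp (- 0) - 0 / Q) (at_right 0)"
      using alpha \<open>0 < Q\<close> by (intro tendsto_intros u_tendsto_0 powr_tendsto_at_right_0) auto
    then show "((\<lambda>t. exp (- u t) - t powr (4 + \<alpha>) / Q) \<longlongrightarrow> 1) (at_right 0)" by simp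
  qed
  then have "ln (r powr (4 + \<alpha>) / Q) < ln (exp (- u r))"
    using assms \<open>0 < Q\<close> by (subst ln_less_cancel_iff) auto
  moreover have "ln (r powr (4 + \<alpha>) / Q) = (4 + \<alpha>) * ln r - ln Q"
    using assms \<open>0 < Q\<close> by (simp add: ln_div ln_powr)
  ultimately have "(4 + \<alpha>) * ln r - ln Q < - u r" by simp
  then show ?thesis unfolding Q_def by (simp add: algebra_simps)
qed

end

lemma entire_sol_imp_entire_radial_solution:
  assumes "3 \<le> N" "-2 < \<alpha>" "entire_sol N \<alpha> \<beta> u"
  obtains u1 v v1 where "entire_radial_solution N \<alpha> u u1 v v1"
proof -
  have "{r. 0 \<le> r \<and> ereal r < \<infinity>} = {0..}" by auto
  with assms(3) obtain u1 v v1 where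
    "\<forall>r. 0 < r \<and> ereal r < \<infinity> \<longrightarrow>
        (u has_real_derivative u1 r) (at r) \<and>
        (u1 has_real_derivative (v r - (real N - 1) / r * u1 r)) (at r) \<and>
        (v has_real_derivative v1 r) (at r) \<and>
        (v1 has_real_derivative (r powr \<alpha> * exp (u r) - (real N - 1) / r * v1 r)) (at r)"
    "(u1 \<longlongrightarrow> 0) (at_right 0)" "((\<lambda>r. r ^ (N - 1) * v1 r) \<longlongrightarrow> 0) (at_right 0)"
    "continuous_on {0..} u" "u 0 = 0"
    unfolding entire_sol_def radial_sol_on_def by auto
  then have "entire_radial_solution N \<alpha> u u1 v v1"
    using assms(1,2) by unfold_locales auto
  then show ?thesis by (rule that)
qed

theorem lemma3p3:
  fixes N :: nat and \<alpha> :: real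
  assumes "N \<ge> 3" and "\<alpha> > -2"
  shows "\<exists>C > 0. \<forall>\<beta> u. \<beta> \<le> beta0 N \<alpha> \<longrightarrow> entire_sol N \<alpha> \<beta> u \<longrightarrow>
           (\<forall>r > 0. u r \<le> - (4 + \<alpha>) * ln r + C)"
proof -
  define C where "C = ln ((4 + \<alpha>) * (N + \<alpha>) * N * (N + 2 + \<alpha>))"
  have "1 < (4 + \<alpha>) * (N + \<alpha>) * N * (N + 2 + \<alpha>)"
    using assms by (intro less_1_mult) auto
  then have "0 < C" unfolding C_def by simp
  \<comment> \<open>The bound holds for every entire solution; \<open>\<beta> \<le> beta0 N \<alpha>\<close> is automatic.\<close>
  moreover have "u r \<le> - (4 + \<alpha>) * ln r + C"
    if sol: "entire_sol N \<alpha> \<beta> u" and "0 < r" for \<beta> u r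
  proof -
    obtain u1 v v1 where "entire_radial_solution N \<alpha> u u1 v v1"
      using entire_sol_imp_entire_radial_solution[OF assms sol] .
    then show ?thesis
      unfolding C_def using entire_radial_solution.u_log_bound[OF _ \<open>0 < r\<close>] by blast
  qed
  ultimately show ?thesis by blast
qed

end
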